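(* Let $n\ge 1$, $k\ge 2$, $\mathcal{K}$ a set of size $k$, $\epsilon\ge 0$ and $p=e^\epsilon/(k-1+e^\epsilon)$. Then, as matrices indexed by $\mathcal{K}^n\times\mathcal{Z}$, $\mathbf{N}\mathbf{S}^r=\mathbf{S}^r\mathbf{N}^r$.
   Context: A dataset is $x\in\mathcal{K}^n$; its histogram $h(x)$ is the map $\kappa\mapsto|\{i:x_i=\kappa\}|$; $\mathcal{Z}$ is the set of all histograms (maps $\mathcal{K}\to\mathbb{N}$ with values summing to $n$) and $\#z$ is the number of datasets with histogram $z$. The full $k$-RR channel $\mathbf{N}:\mathcal{K}^n\to\mathcal{K}^n$ has $\mathbf{N}_{x,y}=\prod_{i=0}^{n-1}q(y_i\mid x_i)$ with $q(b\mid a)=p$ if $b=a$ and $(1-p)/(k-1)$ otherwise. The reduced shuffle channel $\mathbf{S}^r:\mathcal{K}^n\to\mathcal{Z}$ has $\mathbf{S}^r_{x,z}=1$ if $h(x)=z$, else $0$. The reduced $k$-RR channel $\mathbf{N}^r:\mathcal{Z}\to\mathcal{Z}$ is $\mathbf{N}^r_{z',z}=\frac{1}{\#z'}\sum_{x'\in\mathcal{K}^n:\,h(x')=z'}\ \sum_{y\in\mathcal{K}^n:\,h(y)=z}\mathbf{N}_{x',y}$. Products are ordinary matrix products. *)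

theory Defs
  imports Complex_Main "HOL-Library.Cardinality"
begin

text \<open>The alphabet K is a finite type 'k; k = CARD('k).
  Datasets in K^n are lists of length n; histograms are maps 'k => nat summing to n.\<close>

definition datasets :: "nat \<Rightarrow> 'k list set" where
  "datasets n = {x. length x = n}"

definition hist :: "'k list \<Rightarrow> ('k \<Rightarrow> nat)" where
  "hist x = (\<lambda>\<kappa>. card {i. i < length x \<and> x ! i = \<kappa>})"

definition histograms :: "nat \<Rightarrow> ('k::finite \<Rightarrow> nat) set" where
  "histograms n = {z. (\<Sum>\<kappa>\<in>UNIV. z \<kappa>) = n}"

definition num_hist :: "nat \<Rightarrow> ('k \<Rightarrow> nat) \<Rightarrow> nat" where
  "num_hist n z = card {x \<in> datasets n. hist x = z}"

definition krr_q :: "real \<Rightarrow> 'k::finite \<Rightarrow> 'k \<Rightarrow> real" where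
  "krr_q p a b = (if b = a then p else (1 - p) / (real CARD('k) - 1))"

definition krr_N :: "nat \<Rightarrow> real \<Rightarrow> 'k::finite list \<Rightarrow> 'k list \<Rightarrow> real" where
  "krr_N n p x y = (\<Prod>i<n. krr_q p (x ! i) (y ! i))"

definition shuffle_Sr :: "'k list \<Rightarrow> ('k \<Rightarrow> nat) \<Rightarrow> real" where
  "shuffle_Sr x z = (if hist x = z then 1 else 0)"

definition krr_Nr :: "nat \<Rightarrow> real \<Rightarrow> ('k::finite \<Rightarrow> nat) \<Rightarrow> ('k \<Rightarrow> nat) \<Rightarrow> real" where
  "krr_Nr n p z' z = (1 / real (num_hist n z')) *
     (\<Sum>x'\<in>{x'\<in>datasets n. hist x' = z'}. \<Sum>y\<in>{y\<in>datasets n. hist y = z}. krr_N n p x' y)"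

end

theory Submission
  imports Defs "HOL-Combinatorics.Permutations"
begin

text \<open>The k-RR channel treats the n positions of a dataset independently and identically, so
  \<open>N\<close> is invariant under permuting the positions of input and output simultaneously. A
  permutation carrying \<open>x\<close> to \<open>x'\<close> maps every histogram class onto itself, hence the total
  mass \<open>N\<close> sends from \<open>x\<close> into a class depends only on \<open>h(x)\<close>. The average over \<open>h(x)\<close>
  defining \<open>N\<^sup>r\<close> is therefore the average of a constant. The argument works for every
  \<open>p\<close>, \<open>n\<close> and \<open>k\<close>.\<close>

lemma hist_eq_count_mset: "hist x = count (mset x)"
  by (rule ext) (simp add: hist_def count_mset count_list_eq_length_filter
      length_filter_conv_card eq_commute)

lemma hist_permute_list:
  assumes "\<sigma> permutes {..<length x}"
  shows "hist (permute_list \<sigma> x) = hist x"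
  using assms by (simp add: hist_eq_count_mset)

lemma hist_in_histograms:
  fixes x :: "'k::finite list"
  assumes "length x = n"
  shows "hist x \<in> histograms n"
proof -
  have "(\<Sum>\<kappa>\<in>UNIV. card {i. i < length x \<and> x ! i = \<kappa>})
      = card (\<Union>\<kappa>\<in>UNIV. {i. i < length x \<and> x ! i = \<kappa>})"
    by (rule card_UN_disjoint[symmetric]) auto
  also have "(\<Union>\<kappa>\<in>UNIV. {i. i < length x \<and> x ! i = \<kappa>}) = {..<length x}"
    by auto
  finally show ?thesis
    using assms by (simp add: histograms_def hist_def)
qed

lemma finite_histograms: "finite (histograms n :: ('k::finite \<Rightarrow> nat) set)"
proof (rule finite_subset)
  show "histograms n \<subseteq> (UNIV \<rightarrow>\<^sub>E {..n} :: ('k \<Rightarrow> nat) set)"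
  proof
    fix z :: "'k \<Rightarrow> nat"
    assume "z \<in> histograms n"
    then have "z \<kappa> \<le> n" for \<kappa>
      using member_le_sum[of \<kappa> UNIV z] by (simp add: histograms_def)
    then show "z \<in> UNIV \<rightarrow>\<^sub>E {..n}"
      by (simp add: PiE_UNIV_domain)
  qed
qed (simp add: finite_PiE)

lemma finite_datasets: "finite (datasets n :: 'k::finite list set)"
  using finite_lists_length_eq[of "UNIV :: 'k set" n] by (simp add: datasets_def)

lemma sum_mult_shuffle_Sr:
  fixes f :: "'k::finite list \<Rightarrow> real"
  shows "(\<Sum>y\<in>datasets n. f y * shuffle_Sr y z) = (\<Sum>y\<in>{y\<in>datasets n. hist y = z}. f y)"
  by (simp add: shuffle_Sr_def sum.inter_filter[OF finite_datasets] if_distrib[of "(*) _"]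
      cong: if_cong)

lemma sum_shuffle_Sr_mult:
  fixes x :: "'k::finite list" and g :: "('k \<Rightarrow> nat) \<Rightarrow> real"
  assumes "length x = n"
  shows "(\<Sum>z'\<in>histograms n. shuffle_Sr x z' * g z') = g (hist x)"
  using hist_in_histograms[OF assms] sum.delta'[OF finite_histograms, of "hist x" g]
  by (simp add: shuffle_Sr_def if_distrib[of "\<lambda>c. c * _"] cong: if_cong)

lemma permute_list_inv_permute_list:
  assumes "\<sigma> permutes {..<length xs}"
  shows "permute_list (inv \<sigma>) (permute_list \<sigma> xs) = xs"
proof -
  have "permute_list (inv \<sigma>) (permute_list \<sigma> xs) = permute_list (\<sigma> \<circ> inv \<sigma>) xs"
    using assms by (simp add: permute_list_compose permutes_inv)
  then show ?thesis
    using permutes_inv_o(1)[OF assms] by simp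
qed

lemma bij_betw_permute_list_hist_class:
  assumes "\<sigma> permutes {..<n}"
  shows "bij_betw (permute_list \<sigma>) {y\<in>datasets n. hist y = z} {y\<in>datasets n. hist y = z}"
proof (rule bij_betw_byWitness[where f' = "permute_list (inv \<sigma>)"])
  have inv: "inv \<sigma> permutes {..<n}"
    using assms by (rule permutes_inv)
  show "\<forall>y\<in>{y\<in>datasets n. hist y = z}. permute_list (inv \<sigma>) (permute_list \<sigma> y) = y"
    using assms by (simp add: datasets_def permute_list_inv_permute_list)
  show "\<forall>y\<in>{y\<in>datasets n. hist y = z}. permute_list \<sigma> (permute_list (inv \<sigma>) y) = y"
    using permute_list_inv_permute_list[of "inv \<sigma>"] inv inv_inv_eq[OF permutes_bij[OF assms]]
    by (auto simp: datasets_def)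
  show "permute_list \<sigma> ` {y\<in>datasets n. hist y = z} \<subseteq> {y\<in>datasets n. hist y = z}"
    using assms by (auto simp: datasets_def hist_permute_list)
  show "permute_list (inv \<sigma>) ` {y\<in>datasets n. hist y = z} \<subseteq> {y\<in>datasets n. hist y = z}"
    using inv by (auto simp: datasets_def hist_permute_list)
qed

lemma krr_N_permute_list:
  assumes "\<sigma> permutes {..<n}" "length x = n" "length y = n"
  shows "krr_N n p (permute_list \<sigma> x) (permute_list \<sigma> y) = krr_N n p x y"
proof -
  have "krr_N n p (permute_list \<sigma> x) (permute_list \<sigma> y) = (\<Prod>i<n. krr_q p (x ! \<sigma> i) (y ! \<sigma> i))"
    using assms by (simp add: krr_N_def permute_list_nth)
  also have "\<dots> = (\<Prod>i<n. krr_q p (x ! i) (y ! i))"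
    using prod.permute[OF assms(1), of "\<lambda>i. krr_q p (x ! i) (y ! i)"] by (simp add: comp_def)
  finally show ?thesis
    by (simp add: krr_N_def)
qed

lemma sum_krr_N_hist_class_invariant:
  assumes "length x = n" "length x' = n" "hist x' = hist x"
  shows "(\<Sum>y\<in>{y\<in>datasets n. hist y = z}. krr_N n p x' y)
       = (\<Sum>y\<in>{y\<in>datasets n. hist y = z}. krr_N n p x y)"
proof -
  have "mset x' = mset x"
    using assms(3) by (metis hist_eq_count_mset multiset_eqI)
  then obtain \<sigma> where \<sigma>: "\<sigma> permutes {..<n}" and x': "x' = permute_list \<sigma> x"
    using assms(1) by (metis mset_eq_permutation)
  have "(\<Sum>y\<in>{y\<in>datasets n. hist y = z}. krr_N n p x' y)
      = (\<Sum>y\<in>{y\<in>datasets n. hist y = z}. krr_N n p x' (permute_list \<sigma> y))"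
    using sum.reindex_bij_betw[OF bij_betw_permute_list_hist_class[OF \<sigma>], of "krr_N n p x'"]
    by simp
  also have "\<dots> = (\<Sum>y\<in>{y\<in>datasets n. hist y = z}. krr_N n p x y)"
    using krr_N_permute_list[OF \<sigma> assms(1)] x' by (simp add: datasets_def)
  finally show ?thesis .
qed

lemma krr_Nr_hist:
  fixes x :: "'k::finite list"
  assumes "length x = n"
  shows "krr_Nr n p (hist x) z = (\<Sum>y\<in>{y\<in>datasets n. hist y = z}. krr_N n p x y)"
proof -
  let ?C = "{x'\<in>datasets n. hist x' = hist x}"
  let ?f = "\<lambda>x'. \<Sum>y\<in>{y\<in>datasets n. hist y = z}. krr_N n p x' y"
  have "card ?C > 0"
    using assms finite_datasets[of n] by (auto simp: card_gt_0_iff datasets_def)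
  moreover have "(\<Sum>x'\<in>?C. ?f x') = real (card ?C) * ?f x"
    using sum_krr_N_hist_class_invariant[OF assms] by (simp add: datasets_def)
  ultimately show ?thesis
    by (simp add: krr_Nr_def num_hist_def)
qed

theorem mainTheorem4:
  fixes n :: nat and \<epsilon> p :: real
  assumes "n \<ge> 1"
    and "CARD('k::finite) \<ge> 2"
    and "\<epsilon> \<ge> 0"
    and "p = exp \<epsilon> / (real CARD('k) - 1 + exp \<epsilon>)"
  shows "\<forall>x \<in> (datasets n :: 'k list set). \<forall>z \<in> histograms n.
     (\<Sum>y\<in>datasets n. krr_N n p x y * shuffle_Sr y z)
     = (\<Sum>z'\<in>histograms n. shuffle_Sr x z' * krr_Nr n p z' z)"
proof (intro ballI)
  fix x :: "'k list" and z :: "'k \<Rightarrow> nat"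
  assume "x \<in> datasets n"
  then have x: "length x = n"
    by (simp add: datasets_def)
  have "(\<Sum>y\<in>datasets n. krr_N n p x y * shuffle_Sr y z)
      = (\<Sum>y\<in>{y\<in>datasets n. hist y = z}. krr_N n p x y)"
    by (rule sum_mult_shuffle_Sr)
  also have "\<dots> = krr_Nr n p (hist x) z"
    using krr_Nr_hist[OF x] by simp
  also have "\<dots> = (\<Sum>z'\<in>histograms n. shuffle_Sr x z' * krr_Nr n p z' z)"
    using sum_shuffle_Sr_mult[OF x] by simp
  finally show "(\<Sum>y\<in>datasets n. krr_N n p x y * shuffle_Sr y z)
      = (\<Sum>z'\<in>histograms n. shuffle_Sr x z' * krr_Nr n p z' z)" .
qed

end
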